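(* For every set $A$ of positive integers with $1\in A$ and every $n\ge 0$, $\mathrm{Total}(n,A)=G(n,A)$; that is, the maximum total value of a reachable position in the $n$-cell abstract generalized 2048 game with tile values $A$ equals the smallest nonnegative integer for which the greedy change-making algorithm with coin values $A$ uses $n$ or more coins (both sides being $\infty$ simultaneously when no such integer exists).
   Context: For an integer $n\ge 0$, the abstract generalized 2048 game $\mathrm{AGG}(n,A)$ is played on $n$ indistinguishable cells. A position assigns to each cell either nothing (the cell is empty) or a tile carrying a value in $A$. The initial position has all cells empty. A step, which can be performed from any position having at least one empty cell, consists of: (i) placing a new tile of value $1$ into a chosen empty cell; then (ii) optionally choosing any collection of pairwise disjoint sets of nonempty cells such that the sum of the tile values in each chosen set belongs to $A$, and merging each chosen set into a single tile, whose value is that sum, placed in one cell of the set, the other cells of the set becoming empty. The game ends when, after a step, all cells are nonempty (no further step is then possible). A position is reachable if it can be obtained from the initial position by a finite sequence of steps; its total value is the sum of its tile values. $\mathrm{Total}(n,A)$ is the supremum (possibly $\infty$) of the total values of reachable positions of $\mathrm{AGG}(n,A)$ ($\mathrm{Total}(0,A)=0$). The greedy change-making algorithm with coin values $A$, applied to a nonnegative integer $s$, uses no coins if $s=0$, and otherwise selects the largest $c\in A$ with $c\le s$ and then recursively makes change for $s-c$; the number of coins used is the number of selections. $G(n,A)$ is the smallest nonnegative integer $s$ for which this algorithm uses at least $n$ coins ($\infty$ if none exists). *)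

theory Defs
  imports Main "HOL-Library.Multiset" "HOL-Library.Extended_Nat"
begin

text \<open>A position of AGG(n,A) is represented by the multiset of the values of its
  tiles (cells are indistinguishable); the number of empty cells is n - size M.\<close>

definition agg_step :: "nat \<Rightarrow> nat set \<Rightarrow> nat multiset \<Rightarrow> nat multiset \<Rightarrow> bool" where
  "agg_step n A M M' \<longleftrightarrow> size M < n \<and>
     (\<exists>Gs :: nat multiset list.
        (\<forall>g \<in> set Gs. g \<noteq> {#} \<and> sum_mset g \<in> A) \<and>
        sum_list Gs \<subseteq># M + {#1#} \<and>
        M' = (M + {#1#}) - sum_list Gs + mset (map sum_mset Gs))"

inductive agg_reachable :: "nat \<Rightarrow> nat set \<Rightarrow> nat multiset \<Rightarrow> bool" for n A where
  init: "agg_reachable n A {#}"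
| step: "agg_reachable n A M \<Longrightarrow> agg_step n A M M' \<Longrightarrow> agg_reachable n A M'"

definition agg_total :: "nat \<Rightarrow> nat set \<Rightarrow> enat" where
  "agg_total n A = Sup {enat (sum_mset M) | M. agg_reachable n A M}"

text \<open>Number of coins used by the greedy change-making algorithm with coin set A on s.
  (The guard on the empty set only matters when 1 \<notin> A, to make the function total.)\<close>
function greedy_coins :: "nat set \<Rightarrow> nat \<Rightarrow> nat" where
  "greedy_coins A s =
     (if s = 0 \<or> {c \<in> A. 0 < c \<and> c \<le> s} = {} then 0
      else Suc (greedy_coins A (s - Max {c \<in> A. 0 < c \<and> c \<le> s})))"
  by auto
termination
proof (relation "measure snd")
  fix A :: "nat set" and s :: nat
  assume h: "\<not> (s = 0 \<or> {c \<in> A. 0 < c \<and> c \<le> s} = {})"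
  have fin: "finite {c \<in> A. 0 < c \<and> c \<le> s}" by (rule finite_subset[of _ "{..s}"]) auto
  have "Max {c \<in> A. 0 < c \<and> c \<le> s} \<in> {c \<in> A. 0 < c \<and> c \<le> s}"
    using h fin Max_in by blast
  then show "((A, s - Max {c \<in> A. 0 < c \<and> c \<le> s}), A, s) \<in> measure snd"
    using h by auto
qed auto

definition greedy_G :: "nat \<Rightarrow> nat set \<Rightarrow> enat" where
  "greedy_G n A = (if \<exists>s. n \<le> greedy_coins A s
                   then enat (LEAST s. n \<le> greedy_coins A s) else \<infinity>)"

end

theory Submission
  imports Defs "HOL-Library.Sublist"
begin

(* Upper bound.  Put need(s) = max {greedy_coins A u + 1 | u < s} (cells_needed A s), so that
   need(s) <= n iff G(n,A) >= s.  On any u >= a with a in A the greedy algorithm starts with a coin >= a, whence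
   need(a + b) <= max (need a) (1 + need b), and by induction
   need(x_0 + ... + x_(k-1)) <= max_i (i + need x_i) for tiles x_i in A.  Some ordering of the
   tiles of every reachable position keeps this potential at most n: the new 1 goes last, and a
   merged tile takes the place of the first tile of its group.  Hence a reachable total T has
   need(T) <= n, i.e. T <= G(n,A).

   Lower bound.  The greedy representation of s+1 arises from that of s by placing a 1 and
   merging it with a suffix, so the greedy representations of all s <= G(n,A) are reachable. *)

declare greedy_coins.simps[simp del]

definition greedy_coin :: "nat set \<Rightarrow> nat \<Rightarrow> nat" where
  "greedy_coin A s = Max {c \<in> A. 0 < c \<and> c \<le> s}"

lemma finite_coins_le: "finite {c \<in> A. 0 < c \<and> c \<le> (s::nat)}"
  by (rule finite_subset[of _ "{..s}"]) auto

lemma greedy_coin_mem: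
  assumes "a \<in> A" "0 < a" "a \<le> s"
  shows "greedy_coin A s \<in> A" "0 < greedy_coin A s" "greedy_coin A s \<le> s"
proof -
  have "{c \<in> A. 0 < c \<and> c \<le> s} \<noteq> {}" using assms by blast
  from Max_in[OF finite_coins_le this]
  show "greedy_coin A s \<in> A" "0 < greedy_coin A s" "greedy_coin A s \<le> s"
    unfolding greedy_coin_def by auto
qed

lemma le_greedy_coin: "a \<in> A \<Longrightarrow> 0 < a \<Longrightarrow> a \<le> s \<Longrightarrow> a \<le> greedy_coin A s"
  unfolding greedy_coin_def by (rule Max_ge[OF finite_coins_le]) auto

lemma greedy_coins_0 [simp]: "greedy_coins A 0 = 0"
  by (subst greedy_coins.simps) simp

lemma greedy_coins_pos:
  assumes "1 \<in> A" "0 < s"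
  shows "greedy_coins A s = Suc (greedy_coins A (s - greedy_coin A s))"
  using assms by (subst greedy_coins.simps) (auto simp: greedy_coin_def)

definition cells_needed :: "nat set \<Rightarrow> nat \<Rightarrow> nat" where
  "cells_needed A s = Max (insert 0 ((\<lambda>u. Suc (greedy_coins A u)) ` {..<s}))"

lemma cells_needed_le_iff: "cells_needed A s \<le> k \<longleftrightarrow> (\<forall>u<s. greedy_coins A u < k)"
  unfolding cells_needed_def by (auto simp: Suc_le_eq)

lemma greedy_coins_less_cells_needed: "u < s \<Longrightarrow> greedy_coins A u < cells_needed A s"
  using cells_needed_le_iff[of A s "cells_needed A s"] by auto

lemma cells_needed_Suc_0 [simp]: "cells_needed A (Suc 0) = 1"
proof (rule antisym)
  show "cells_needed A (Suc 0) \<le> 1" by (simp add: cells_needed_le_iff)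
  show "1 \<le> cells_needed A (Suc 0)" using greedy_coins_less_cells_needed[of 0 "Suc 0" A] by simp
qed

lemma cells_needed_add:
  assumes "1 \<in> A" "a \<in> A" "0 < a"
  shows "cells_needed A (a + b) \<le> max (cells_needed A a) (Suc (cells_needed A b))"
  unfolding cells_needed_le_iff
proof (intro allI impI)
  fix u assume u: "u < a + b"
  show "greedy_coins A u < max (cells_needed A a) (Suc (cells_needed A b))"
  proof (cases "u < a")
    case True
    then show ?thesis using greedy_coins_less_cells_needed by (simp add: less_max_iff_disj)
  next
    case False
    define c where "c = greedy_coin A u"
    have "0 < u" "a \<le> c" "c \<le> u"
      using assms False le_greedy_coin greedy_coin_mem(3) unfolding c_def by auto
    then have "greedy_coins A (u - c) < cells_needed A b"
      using u by (intro greedy_coins_less_cells_needed) linarith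
    then show ?thesis using greedy_coins_pos[OF assms(1) \<open>0 < u\<close>] by (simp add: c_def)
  qed
qed

text \<open>For an arrangement \<open>x_0, \<dots>, x_(k-1)\<close> of tiles this is
  \<open>max k (max_i (i + cells_needed A x_i))\<close>.\<close>

fun potential :: "nat set \<Rightarrow> nat list \<Rightarrow> nat" where
  "potential A [] = 0"
| "potential A (x # xs) = max (cells_needed A x) (Suc (potential A xs))"

lemma potential_append:
  "potential A (xs @ ys) = max (potential A xs) (length xs + potential A ys)"
  by (induction xs) auto

lemma cells_needed_sum_list_le_potential:
  assumes "1 \<in> A" "0 \<notin> A" "set xs \<subseteq> A"
  shows "cells_needed A (sum_list xs) \<le> potential A xs"
  using assms(3)
proof (induction xs)
  case Nil
  then show ?case by (simp add: cells_needed_def)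
next
  case (Cons x xs)
  then have "x \<in> A" "0 < x" using assms(2) by (auto intro: gr0I)
  then show ?case using Cons cells_needed_add[OF assms(1)] by (fastforce intro: le_trans)
qed

lemma potential_subseq: "subseq ys xs \<Longrightarrow> potential A ys \<le> potential A xs"
  by (induction rule: list_emb.induct) (auto intro: max.coboundedI2 max.mono)

lemma submset_subseq: "h \<subseteq># mset xs \<Longrightarrow> \<exists>ys. subseq ys xs \<and> mset ys = h"
proof (induction xs arbitrary: h)
  case Nil
  then show ?case by auto
next
  case (Cons x xs)
  show ?case
  proof (cases "x \<in># h")
    case True
    then have "h - {#x#} \<subseteq># mset xs"
      using Cons.prems by (metis add_mset_add_single mset.simps(2) subset_eq_diff_conv)
    then obtain ys where "subseq ys xs" "mset ys = h - {#x#}" using Cons.IH by blast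
    then show ?thesis using True by (intro exI[of _ "x # ys"]) auto
  next
    case False
    then have "h \<subseteq># mset xs"
      using Cons.prems
      by (metis add_mset_add_single diff_single_trivial mset.simps(2) subset_eq_diff_conv)
    then show ?thesis using Cons.IH by (blast intro: list_emb_Cons)
  qed
qed

text \<open>The merged tile is put where the first tile of the group was.\<close>

lemma merge_group_potential:
  assumes "1 \<in> A" "0 \<notin> A"
  shows "set xs \<subseteq> A \<Longrightarrow> g \<subseteq># mset xs \<Longrightarrow> g \<noteq> {#} \<Longrightarrow>
    \<exists>ys. mset ys = mset xs - g + {#sum_mset g#} \<and> potential A ys \<le> potential A xs"
proof (induction xs arbitrary: g)
  case Nil
  then show ?case by auto
next
  case (Cons x xs)
  show ?case
  proof (cases "x \<in># g")
    case True
    have "g - {#x#} \<subseteq># mset xs"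
      using Cons.prems(2) by (metis add_mset_add_single mset.simps(2) subset_eq_diff_conv)
    then obtain zs where zs: "subseq zs xs" "mset zs = g - {#x#}"
      using submset_subseq by blast
    obtain rs where rs: "subseq rs xs" "mset rs = mset xs - (g - {#x#})"
      using submset_subseq[of "mset xs - (g - {#x#})" xs] by auto
    have g: "g = mset (x # zs)" using zs(2) True by simp
    have "set (x # zs) \<subseteq> A" using Cons.prems(1) zs(1) by (auto dest: list_emb_set)
    then have "cells_needed A (sum_list (x # zs)) \<le> potential A (x # zs)"
      by (rule cells_needed_sum_list_le_potential[OF assms])
    then have "cells_needed A (sum_mset g) \<le> potential A (x # zs)"
      by (simp only: g sum_mset_sum_list)
    also have "\<dots> \<le> potential A (x # xs)" using zs(1) by (intro potential_subseq) simp
    finally have "cells_needed A (sum_mset g) \<le> potential A (x # xs)" .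
    moreover have "Suc (potential A rs) \<le> potential A (x # xs)"
      using potential_subseq[OF rs(1), of A] by (simp add: le_max_iff_disj)
    ultimately have "potential A (sum_mset g # rs) \<le> potential A (x # xs)"
      by (simp only: potential.simps(2) max.bounded_iff)
    moreover have "mset (sum_mset g # rs) = mset (x # xs) - g + {#sum_mset g#}"
      using rs(2) g by simp
    ultimately show ?thesis by blast
  next
    case False
    then have "g \<subseteq># mset xs" using Cons.prems(2)
      by (metis add_mset_add_single diff_single_trivial mset.simps(2) subset_eq_diff_conv)
    then obtain ys where ys: "mset ys = mset xs - g + {#sum_mset g#}" "potential A ys \<le> potential A xs"
      using Cons by auto
    have "mset (x # ys) = mset (x # xs) - g + {#sum_mset g#}"
      using ys(1) False \<open>g \<subseteq># mset xs\<close> by (simp add: subset_mset.diff_add_assoc2)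
    moreover have "potential A (x # ys) \<le> potential A (x # xs)" using ys(2) by auto
    ultimately show ?thesis by blast
  qed
qed

lemma merge_groups_potential:
  assumes "1 \<in> A" "0 \<notin> A"
  shows "set xs \<subseteq> A \<Longrightarrow> \<forall>g \<in> set Gs. g \<noteq> {#} \<and> sum_mset g \<in> A \<Longrightarrow>
    sum_list Gs \<subseteq># mset xs \<Longrightarrow>
    \<exists>ys. mset ys = mset xs - sum_list Gs + mset (map sum_mset Gs) \<and> set ys \<subseteq> A \<and>
      potential A ys \<le> potential A xs"
proof (induction Gs arbitrary: xs)
  case Nil
  then show ?case by auto
next
  case (Cons g Gs)
  obtain R where R: "mset xs = g + sum_list Gs + R"
    using Cons.prems(3) by (auto simp: subset_mset.le_iff_add)
  have "g \<subseteq># mset xs" using R by simp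
  then obtain ys1 where ys1: "mset ys1 = mset xs - g + {#sum_mset g#}"
    "potential A ys1 \<le> potential A xs"
    using merge_group_potential[OF assms Cons.prems(1)] Cons.prems(2) by auto
  have "set ys1 \<subseteq> A"
    using Cons.prems(1,2) ys1(1) by (auto dest!: in_diffD simp flip: set_mset_mset)
  moreover have "\<forall>g \<in> set Gs. g \<noteq> {#} \<and> sum_mset g \<in> A" using Cons.prems(2) by simp
  moreover have "sum_list Gs \<subseteq># mset ys1" using ys1(1) R by simp
  ultimately obtain ys where "mset ys = mset ys1 - sum_list Gs + mset (map sum_mset Gs)"
    "set ys \<subseteq> A" "potential A ys \<le> potential A ys1"
    using Cons.IH by blast
  then show ?case using ys1 R by (intro exI[of _ ys]) (auto simp: add.assoc)
qed

lemma reachable_potential: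
  assumes "1 \<in> A" "0 \<notin> A" "agg_reachable n A M"
  shows "\<exists>xs. mset xs = M \<and> set xs \<subseteq> A \<and> potential A xs \<le> n"
  using assms(3)
proof (induction rule: agg_reachable.induct)
  case init
  then show ?case by auto
next
  case (step M M')
  obtain xs where xs: "mset xs = M" "set xs \<subseteq> A" "potential A xs \<le> n"
    using step.IH by blast
  obtain Gs where Gs: "\<forall>g \<in> set Gs. g \<noteq> {#} \<and> sum_mset g \<in> A" "sum_list Gs \<subseteq># M + {#1#}"
    "M' = M + {#1#} - sum_list Gs + mset (map sum_mset Gs)" "size M < n"
    using step.hyps(2) unfolding agg_step_def by blast
  have "potential A (xs @ [1]) \<le> n"
    using xs Gs(4) by (auto simp: potential_append)
  moreover have "mset (xs @ [1]) = M + {#1#}" "set (xs @ [1]) \<subseteq> A"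
    using xs assms(1) by auto
  ultimately show ?case
    using merge_groups_potential[OF assms(1,2) _ Gs(1), of "xs @ [1]"] Gs(2,3)
    by (metis order.trans)
qed

lemma reachable_total_le:
  assumes "1 \<in> A" "0 \<notin> A" "agg_reachable n A M" "n \<le> greedy_coins A s"
  shows "sum_mset M \<le> s"
proof -
  obtain xs where xs: "mset xs = M" "set xs \<subseteq> A" "potential A xs \<le> n"
    using reachable_potential[OF assms(1-3)] by blast
  then have "cells_needed A (sum_mset M) \<le> n"
    using cells_needed_sum_list_le_potential[OF assms(1,2) xs(2)] by (auto simp: sum_mset_sum_list)
  then show ?thesis using assms(4) by (auto simp: cells_needed_le_iff not_le[symmetric])
qed

function greedy_change :: "nat set \<Rightarrow> nat \<Rightarrow> nat list" where
  "greedy_change A s =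
     (if s = 0 \<or> {c \<in> A. 0 < c \<and> c \<le> s} = {} then []
      else greedy_coin A s # greedy_change A (s - greedy_coin A s))"
  by auto
termination
  by (relation "measure snd") (auto dest: greedy_coin_mem(2,3))

declare greedy_change.simps[simp del]

lemma length_greedy_change: "length (greedy_change A s) = greedy_coins A s"
  by (induction A s rule: greedy_change.induct)
    (subst greedy_change.simps, subst greedy_coins.simps, simp add: greedy_coin_def)

lemma sum_list_greedy_change:
  assumes "1 \<in> A"
  shows "sum_list (greedy_change A s) = s"
proof (induction s rule: less_induct)
  case (less s)
  show ?case
  proof (cases "s = 0")
    case False
    then have c: "0 < greedy_coin A s" "greedy_coin A s \<le> s"
      using greedy_coin_mem(2,3)[OF assms, of s] by auto
    then have "sum_list (greedy_change A (s - greedy_coin A s)) = s - greedy_coin A s"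
      by (intro less.IH) simp
    then show ?thesis using False c assms by (subst greedy_change.simps) auto
  qed (simp add: greedy_change.simps)
qed

lemma greedy_coin_Suc:
  assumes "Suc s \<notin> A"
  shows "greedy_coin A (Suc s) = greedy_coin A s"
proof -
  have "{c \<in> A. 0 < c \<and> c \<le> Suc s} = {c \<in> A. 0 < c \<and> c \<le> s}"
    using assms by (auto simp: le_Suc_eq)
  then show ?thesis by (simp add: greedy_coin_def)
qed

lemma greedy_change_Suc:
  assumes "1 \<in> A"
  shows "\<exists>pre suf. greedy_change A s = pre @ suf \<and>
    greedy_change A (Suc s) = pre @ [Suc (sum_list suf)] \<and> Suc (sum_list suf) \<in> A"
proof (induction s rule: less_induct)
  case (less s)
  show ?case
  proof (cases "Suc s \<in> A")
    case True
    then have "greedy_coin A (Suc s) = Suc s"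
      using le_greedy_coin greedy_coin_mem(3) by (simp add: antisym)
    then have "greedy_change A (Suc s) = [Suc s]"
      using True by (subst greedy_change.simps) (auto simp: greedy_change.simps)
    then show ?thesis
      using True sum_list_greedy_change[OF assms, of s]
      by (intro exI[of _ "[]"] exI[of _ "greedy_change A s"]) simp
  next
    case False
    define c where "c = greedy_coin A s"
    have "0 < s" using False assms by (cases s) auto
    then have c: "c \<in> A" "0 < c" "c \<le> s"
      using greedy_coin_mem[OF assms, of s] by (auto simp: c_def)
    have "greedy_change A s = c # greedy_change A (s - c)"
      using \<open>0 < s\<close> c by (subst greedy_change.simps) (auto simp: c_def)
    moreover have "greedy_change A (Suc s) = c # greedy_change A (Suc (s - c))"
      using c False by (subst greedy_change.simps) (auto simp: c_def greedy_coin_Suc Suc_diff_le)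
    moreover obtain pre suf where "greedy_change A (s - c) = pre @ suf"
      "greedy_change A (Suc (s - c)) = pre @ [Suc (sum_list suf)]" "Suc (sum_list suf) \<in> A"
      using less.IH[of "s - c"] c \<open>0 < s\<close> by auto
    ultimately show ?thesis by (intro exI[of _ "c # pre"] exI[of _ suf]) auto
  qed
qed

lemma agg_step_greedy_change:
  assumes "1 \<in> A" "greedy_coins A s < n"
  shows "agg_step n A (mset (greedy_change A s)) (mset (greedy_change A (Suc s)))"
proof -
  obtain pre suf where split: "greedy_change A s = pre @ suf"
    "greedy_change A (Suc s) = pre @ [Suc (sum_list suf)]" "Suc (sum_list suf) \<in> A"
    using greedy_change_Suc[OF assms(1)] by blast
  show ?thesis
    unfolding agg_step_def
  proof (intro conjI exI[of _ "[mset suf + {#1#}]"])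
    show "size (mset (greedy_change A s)) < n"
      using assms(2) by (simp add: length_greedy_change)
  qed (use split in \<open>auto simp: sum_mset_sum_list\<close>)
qed

lemma reachable_greedy_change:
  assumes "1 \<in> A" "\<forall>u<s. greedy_coins A u < n"
  shows "agg_reachable n A (mset (greedy_change A s))"
  using assms(2)
proof (induction s)
  case 0
  then show ?case by (simp add: greedy_change.simps agg_reachable.init)
next
  case (Suc s)
  then show ?case
    using agg_reachable.step agg_step_greedy_change[OF assms(1)] by simp
qed

lemma Sup_enat_eq_Least:
  fixes S :: "enat set" and P :: "nat \<Rightarrow> bool"
  assumes lower: "\<And>s. \<forall>u<s. \<not> P u \<Longrightarrow> enat s \<in> S"
    and upper: "\<And>x s. x \<in> S \<Longrightarrow> P s \<Longrightarrow> x \<le> enat s"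
  shows "Sup S = (if \<exists>s. P s then enat (LEAST s. P s) else \<infinity>)"
proof (cases "\<exists>s. P s")
  case True
  have "enat (LEAST s. P s) \<in> S" using lower not_less_Least by blast
  moreover have "x \<le> enat (LEAST s. P s)" if "x \<in> S" for x
    using upper[OF that] LeastI_ex[OF True] .
  ultimately have "Sup S = enat (LEAST s. P s)" by (blast intro: antisym Sup_upper Sup_least)
  then show ?thesis using True by simp
next
  case False
  then have "enat k \<le> Sup S" for k using lower by (auto intro: Sup_upper)
  then have "Sup S = \<infinity>"
  proof (cases "Sup S")
    case (enat m)
    then show ?thesis using \<open>enat (Suc m) \<le> Sup S\<close> by simp
  qed simp
  then show ?thesis using False by simp
qed

theorem mainTheorem10:
  fixes A :: "nat set" and n :: nat
  assumes "1 \<in> A" and "0 \<notin> A"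
  shows "agg_total n A = greedy_G n A"
proof -
  let ?totals = "{enat (sum_mset M) | M. agg_reachable n A M}"
  have "enat s \<in> ?totals" if "\<forall>u<s. \<not> n \<le> greedy_coins A u" for s
  proof -
    have "agg_reachable n A (mset (greedy_change A s))"
      using reachable_greedy_change[OF assms(1)] that by (simp add: not_le)
    moreover have "sum_mset (mset (greedy_change A s)) = s"
      by (simp add: sum_mset_sum_list sum_list_greedy_change[OF assms(1)])
    ultimately show ?thesis by (metis (mono_tags, lifting) mem_Collect_eq)
  qed
  moreover have "x \<le> enat s" if "x \<in> ?totals" "n \<le> greedy_coins A s" for x s
    using that reachable_total_le[OF assms] by auto
  ultimately show ?thesis
    unfolding agg_total_def greedy_G_def by (rule Sup_enat_eq_Least)
qed

end
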